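(* Let $d \ge 1$, let $f: \mathbb{R}^d \to \mathbb{R}^d$ be differentiable, let ${\mathbf{x}}_0 \in \mathbb{R}^d$, and let $A = J_f({\mathbf{x}}_0)$ be the $d \times d$ Jacobian matrix of $f$ at ${\mathbf{x}}_0$. Assume $f$ is $L$-Lipschitz continuous with Lipschitz constant $L < 1$ (so that the spectral radius of $A$ satisfies $\rho(A) \le L < 1$). Then the quantity $$\mathcal{E}(A) := \mathrm{Tr}(A) - \log |\det(I + A)|$$ satisfies $$|\mathcal{E}(A)| \le d\big(-\log(1-L) - L\big).$$
   Context: $I$ denotes the $d\times d$ identity matrix, $\mathrm{Tr}$ the trace, and Lipschitz continuity is with respect to the Euclidean norm on $\mathbb{R}^d$. *)

theory Defs
  imports "HOL-Analysis.Analysis"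
begin

end

theory Submission
  imports Defs
begin

text \<open>
  Restricting \<open>f\<close> to lines through \<open>x0\<close> shows that the Lipschitz constant bounds the
  Jacobian: \<open>norm (A *v v) \<le> L * norm v\<close>. For \<open>0 \<le> t \<le> 1\<close> the matrix \<open>I + t A\<close> is then
  invertible with \<open>norm ((I + t A)\<^sup>-\<^sup>1) \<le> 1 / (1 - t L)\<close>, so \<open>det (I + t A)\<close> stays positive.
  Interpolate with \<open>g t = t trace A - ln (det (I + t A))\<close> and \<open>h t = d (- ln (1 - t L) - t L)\<close>.
  By Jacobi's formula \<open>g' t = trace A - trace ((I + t A)\<^sup>-\<^sup>1 A) = t trace ((I + t A)\<^sup>-\<^sup>1 A\<^sup>2)\<close>,
  and every diagonal entry of \<open>t (I + t A)\<^sup>-\<^sup>1 A\<^sup>2\<close> is at most \<open>t L\<^sup>2 / (1 - t L)\<close> in modulus,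
  so \<open>\<bar>g' t\<bar> \<le> h' t\<close>. As \<open>g 0 = h 0 = 0\<close>, the mean value inequality gives \<open>\<bar>g 1\<bar> \<le> h 1\<close>.
\<close>

lemma has_derivative_norm_le_lipschitz:
  fixes f :: "'a::real_normed_vector \<Rightarrow> 'b::real_normed_vector"
  assumes f': "(f has_derivative D) (at x)" and lip: "L-lipschitz_on UNIV f"
  shows "norm (D v) \<le> L * norm v"
proof -
  define q where "q t = (f (x + t *\<^sub>R v) - f x) /\<^sub>R t" for t :: real
  have "((\<lambda>t. x + t *\<^sub>R v) has_derivative (\<lambda>t. t *\<^sub>R v)) (at 0)"
    by (auto intro!: derivative_eq_intros)
  moreover have "(f has_derivative D) (at (x + 0 *\<^sub>R v))"
    using f' by simp
  ultimately have "((\<lambda>t. f (x + t *\<^sub>R v)) has_derivative (\<lambda>t. D (t *\<^sub>R v))) (at 0)"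
    by (rule has_derivative_compose)
  then have "((\<lambda>t. norm (f (x + t *\<^sub>R v) - f x - t *\<^sub>R D v) / \<bar>t\<bar>) \<longlongrightarrow> 0) (at 0)"
    using has_derivative_linear[OF f'] by (simp add: has_derivative_iff_norm linear_scale)
  moreover have "norm (f (x + t *\<^sub>R v) - f x - t *\<^sub>R D v) / \<bar>t\<bar> = norm (q t - D v)" if "t \<noteq> 0" for t
  proof -
    have "f (x + t *\<^sub>R v) - f x - t *\<^sub>R D v = t *\<^sub>R (q t - D v)"
      using that by (simp add: q_def algebra_simps)
    then show ?thesis using that by simp
  qed
  ultimately have "((\<lambda>t. norm (q t - D v)) \<longlongrightarrow> 0) (at 0)"
    by (rule Lim_transform_within[OF _ zero_less_one]) auto
  then have "(q \<longlongrightarrow> D v) (at 0)"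
    by (simp add: tendsto_norm_zero_iff LIM_zero_iff)
  moreover have "norm (q t) \<le> L * norm v" if "t \<noteq> 0" for t
  proof -
    have "norm (q t) = norm (f (x + t *\<^sub>R v) - f x) / \<bar>t\<bar>"
      by (simp add: q_def divide_inverse_commute)
    also have "\<dots> \<le> L * norm v"
      using lipschitz_on_normD[OF lip, of "x + t *\<^sub>R v" x] that by (simp add: divide_le_eq mult_ac)
    finally show ?thesis .
  qed
  then have "\<forall>\<^sub>F t in at 0. norm (q t) \<le> L * norm v"
    by (simp add: eventually_at_filter)
  ultimately show ?thesis
    by (intro Lim_norm_ubound[of "at 0"]) auto
qed

lemma matrix_inv_right:
  fixes A :: "'a::semiring_1^'n^'n"
  assumes "invertible A"
  shows "A ** matrix_inv A = mat 1"
  using someI_ex[OF assms[unfolded invertible_def]] by (simp add: matrix_inv_def)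

lemma matrix_inv_left:
  fixes A :: "'a::semiring_1^'n^'n"
  assumes "invertible A"
  shows "matrix_inv A ** A = mat 1"
  using someI_ex[OF assms[unfolded invertible_def]] by (simp add: matrix_inv_def)

lemma prod_mat1_remove_permutes_eq_0:
  fixes p :: "'n::finite \<Rightarrow> 'n"
  assumes p: "p permutes UNIV" and "p \<noteq> id"
  shows "(\<Prod>j\<in>UNIV - {i}. (mat 1 :: 'a::comm_semiring_1^'n^'n) $ j $ p j) = 0"
proof -
  obtain a where a: "p a \<noteq> a"
    using \<open>p \<noteq> id\<close> by (metis eq_id_iff)
  moreover have "p (p a) \<noteq> p a"
    using a permutes_inj[OF p] by (metis injD)
  ultimately obtain j where "j \<noteq> i" "p j \<noteq> j"
    by metis
  then show ?thesis
    by (intro prod_zero) (auto simp: mat_def intro!: bexI[of _ j])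
qed

lemma has_real_derivative_det_mat1_add_scaleR:
  fixes B :: "real^'n^'n"
  shows "((\<lambda>h. det (mat 1 + h *\<^sub>R B)) has_real_derivative trace B) (at 0)"
proof -
  let ?D = "\<lambda>p. of_int (sign p) *
    (\<Sum>i\<in>UNIV. B $ i $ p i * (\<Prod>j\<in>UNIV - {i}. (mat 1 :: real^'n^'n) $ j $ p j))"
  have "((\<lambda>h. of_int (sign p) * (\<Prod>i\<in>UNIV. (mat 1 + h *\<^sub>R B) $ i $ p i))
      has_real_derivative ?D p) (at 0)" for p
    by (auto intro!: derivative_eq_intros has_field_derivative_prod)
  then have "((\<lambda>h. det (mat 1 + h *\<^sub>R B)) has_real_derivative (\<Sum>p | p permutes UNIV. ?D p)) (at 0)"
    unfolding det_def by (rule DERIV_sum)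
  moreover have "(\<Sum>p | p permutes UNIV. ?D p) = ?D id"
    using sum.mono_neutral_right[of "{p. p permutes UNIV}" "{id}" ?D]
    by (simp add: finite_permutations permutes_id prod_mat1_remove_permutes_eq_0)
  moreover have "?D id = trace B"
    by (simp add: trace_def mat_def)
  ultimately show ?thesis
    by simp
qed

lemma has_real_derivative_det_add_scaleR:
  fixes M A :: "real^'n^'n"
  assumes "invertible (M + t *\<^sub>R A)"
  shows "((\<lambda>s. det (M + s *\<^sub>R A)) has_real_derivative
    det (M + t *\<^sub>R A) * trace (matrix_inv (M + t *\<^sub>R A) ** A)) (at t)"
proof -
  define P where "P = M + t *\<^sub>R A"
  define N where "N = matrix_inv P"
  have "P ** N = mat 1"
    using matrix_inv_right assms by (simp add: P_def N_def)
  then have "P ** (N ** A) = A"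
    by (metis matrix_mul_assoc matrix_mul_lid)
  then have "P ** (mat 1 + (s - t) *\<^sub>R (N ** A)) = P + (s - t) *\<^sub>R A" for s
    by (simp add: matrix_add_ldistrib matrix_scalar_ac flip: scalar_matrix_assoc)
  then have factor: "M + s *\<^sub>R A = P ** (mat 1 + (s - t) *\<^sub>R (N ** A))" for s
    by (simp add: P_def algebra_simps)
  have "((\<lambda>s. det (mat 1 + (s - t) *\<^sub>R (N ** A))) has_real_derivative trace (N ** A)) (at t)"
    using has_real_derivative_det_mat1_add_scaleR[of "N ** A"] DERIV_shift[of _ _ 0 t] by simp
  then have "((\<lambda>s. det P * det (mat 1 + (s - t) *\<^sub>R (N ** A))) has_real_derivative
      det P * trace (N ** A)) (at t)"
    by (rule DERIV_cmult)
  then show ?thesis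
    by (simp add: factor det_mul flip: P_def N_def)
qed

lemma norm_mat1_add_matrix_vector_ge:
  fixes B :: "real^'n^'n"
  assumes "\<And>x. norm (B *v x) \<le> K * norm x"
  shows "(1 - K) * norm x \<le> norm ((mat 1 + B) *v x)"
proof -
  have "norm x - norm (B *v x) \<le> norm (x + B *v x)"
    by (metis norm_diff_ineq norm_minus_cancel diff_minus_eq_add)
  then show ?thesis
    using assms[of x] by (simp add: matrix_vector_mult_add_rdistrib algebra_simps)
qed

lemma invertible_mat1_add:
  fixes B :: "real^'n^'n"
  assumes "\<And>x. norm (B *v x) \<le> K * norm x" and "K < 1"
  shows "invertible (mat 1 + B)"
proof -
  have "x = 0" if "(mat 1 + B) *v x = 0" for x
    using norm_mat1_add_matrix_vector_ge[OF assms(1), of x] that \<open>K < 1\<close> by (simp add: mult_le_0_iff)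
  then show ?thesis
    using matrix_left_invertible_ker invertible_left_inverse by blast
qed

lemma norm_matrix_inv_mat1_add_le:
  fixes B :: "real^'n^'n"
  assumes "\<And>x. norm (B *v x) \<le> K * norm x" and "K < 1"
  shows "norm (matrix_inv (mat 1 + B) *v y) \<le> norm y / (1 - K)"
proof -
  have "(mat 1 + B) *v (matrix_inv (mat 1 + B) *v y) = y"
    using matrix_inv_right[OF invertible_mat1_add[OF assms]] by (simp add: matrix_vector_mul_assoc)
  then show ?thesis
    using norm_mat1_add_matrix_vector_ge[OF assms(1), of "matrix_inv (mat 1 + B) *v y"] \<open>K < 1\<close>
    by (simp add: field_simps)
qed

lemma abs_trace_le:
  fixes M :: "real^'n^'n"
  assumes "\<And>x. norm (M *v x) \<le> c * norm x"
  shows "\<bar>trace M\<bar> \<le> real CARD('n) * c"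
proof -
  have "\<bar>M $ i $ i\<bar> \<le> c" for i
  proof -
    have "\<bar>M $ i $ i\<bar> = \<bar>(M *v axis i 1) $ i\<bar>"
      by (simp add: matrix_vector_mult_basis column_def)
    also have "\<dots> \<le> c"
      using component_le_norm_cart[of "M *v axis i 1" i] assms[of "axis i 1"] by simp
    finally show ?thesis .
  qed
  then have "(\<Sum>i\<in>UNIV. \<bar>M $ i $ i\<bar>) \<le> real CARD('n) * c"
    using sum_bounded_above[of UNIV "\<lambda>i. \<bar>M $ i $ i\<bar>" c] by simp
  moreover have "\<bar>trace M\<bar> \<le> (\<Sum>i\<in>UNIV. \<bar>M $ i $ i\<bar>)"
    unfolding trace_def by (rule sum_abs)
  ultimately show ?thesis
    by linarith
qed

lemma norm_scaleR_matrix_vector_le: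
  fixes A :: "real^'n^'m"
  assumes "\<And>x. norm (A *v x) \<le> L * norm x"
  shows "norm ((t *\<^sub>R A) *v x) \<le> (\<bar>t\<bar> * L) * norm x"
  using assms[of x] by (simp add: mult_left_mono mult.assoc flip: scaleR_matrix_vector_assoc)

lemma abs_trace_sub_matrix_inv_mult_le:
  fixes A :: "real^'n^'n"
  assumes A: "\<And>x. norm (A *v x) \<le> L * norm x" and "0 \<le> L" and tL: "\<bar>t\<bar> * L < 1"
  shows "\<bar>trace A - trace (matrix_inv (mat 1 + t *\<^sub>R A) ** A)\<bar>
    \<le> real CARD('n) * (\<bar>t\<bar> * L\<^sup>2 / (1 - \<bar>t\<bar> * L))"
proof -
  define N where "N = matrix_inv (mat 1 + t *\<^sub>R A)"
  note tA = norm_scaleR_matrix_vector_le[OF A]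
  have "N ** (mat 1 + t *\<^sub>R A) = mat 1"
    unfolding N_def using matrix_inv_left[OF invertible_mat1_add[OF tA tL]] .
  then have "N *v ((mat 1 + t *\<^sub>R A) *v y) = y" for y
    by (simp add: matrix_vector_mul_assoc)
  then have resolvent: "y - N *v y = t *\<^sub>R (N *v (A *v y))" for y
    by (simp add: matrix_vector_mult_add_rdistrib matrix_vector_right_distrib matrix_vector_mult_scaleR
        algebra_simps flip: scaleR_matrix_vector_assoc)
  have "norm ((A - N ** A) *v x) \<le> \<bar>t\<bar> * L\<^sup>2 / (1 - \<bar>t\<bar> * L) * norm x" for x
  proof -
    have "norm ((A - N ** A) *v x) = \<bar>t\<bar> * norm (N *v (A *v (A *v x)))"
      using resolvent[of "A *v x"] by (simp add: matrix_vector_mult_diff_rdistrib matrix_vector_mul_assoc)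
    also have "\<dots> \<le> \<bar>t\<bar> * (norm (A *v (A *v x)) / (1 - \<bar>t\<bar> * L))"
      using norm_matrix_inv_mat1_add_le[OF tA tL, of "A *v (A *v x)"]
      by (intro mult_left_mono) (simp_all add: N_def)
    also have "\<dots> \<le> \<bar>t\<bar> * (L\<^sup>2 * norm x / (1 - \<bar>t\<bar> * L))"
    proof -
      have "norm (A *v (A *v x)) \<le> L * (L * norm x)"
        using A[of "A *v x"] A[of x] \<open>0 \<le> L\<close> by (meson mult_left_mono order_trans)
      then show ?thesis
        using tL by (intro mult_left_mono divide_right_mono) (auto simp: power2_eq_square)
    qed
    finally show ?thesis
      by simp
  qed
  then have "\<bar>trace (A - N ** A)\<bar> \<le> real CARD('n) * (\<bar>t\<bar> * L\<^sup>2 / (1 - \<bar>t\<bar> * L))"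
    by (rule abs_trace_le)
  then show ?thesis
    by (simp add: trace_sub N_def)
qed

lemma pos_if_continuous_on_nonvanishing:
  fixes d :: "real \<Rightarrow> real"
  assumes cont: "continuous_on {a..b} d" and nz: "\<And>s. s \<in> {a..b} \<Longrightarrow> d s \<noteq> 0"
    and "0 < d a" and t: "t \<in> {a..b}"
  shows "0 < d t"
proof (rule ccontr)
  assume "\<not> 0 < d t"
  moreover have "continuous_on {a..t} d"
    using t by (auto intro: continuous_on_subset[OF cont])
  ultimately obtain s where "a \<le> s" "s \<le> t" "d s = 0"
    using IVT2'[of d t 0 a] \<open>0 < d a\<close> t by auto
  then show False
    using nz t by auto
qed

lemma abs_trace_sub_ln_abs_det_le:
  fixes A :: "real^'n^'n"
  assumes A: "\<And>x. norm (A *v x) \<le> L * norm x" and "0 \<le> L" and "L < 1"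
  shows "\<bar>trace A - ln \<bar>det (mat 1 + A)\<bar>\<bar> \<le> real CARD('n) * (- ln (1 - L) - L)"
proof -
  define d where "d = (\<lambda>t. det (mat 1 + t *\<^sub>R A))"
  define g where "g = (\<lambda>t. t * trace A - ln (d t))"
  define g' where "g' = (\<lambda>t. trace A - trace (matrix_inv (mat 1 + t *\<^sub>R A) ** A))"
  define h where "h = (\<lambda>t. real CARD('n) * (- ln (1 - t * L) - t * L))"
  define h' where "h' = (\<lambda>t. real CARD('n) * (t * L\<^sup>2 / (1 - t * L)))"
  have tL: "\<bar>t\<bar> * L < 1" if "t \<in> {0..1}" for t
    using that \<open>0 \<le> L\<close> \<open>L < 1\<close> mult_left_le_one_le[of L t] by auto
  have inv: "invertible (mat 1 + t *\<^sub>R A)" if "t \<in> {0..1}" for t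
    using invertible_mat1_add[OF norm_scaleR_matrix_vector_le[OF A] tL[OF that]] .
  have d': "(d has_real_derivative d t * trace (matrix_inv (mat 1 + t *\<^sub>R A) ** A)) (at t)"
    if "t \<in> {0..1}" for t
    using has_real_derivative_det_add_scaleR[of "mat 1" t A] inv[OF that] by (simp add: d_def)
  have d_pos: "0 < d t" if "t \<in> {0..1}" for t
  proof (rule pos_if_continuous_on_nonvanishing[OF _ _ _ that])
    show "continuous_on {0..1} d"
      using d' DERIV_isCont by (blast intro: continuous_at_imp_continuous_on)
    show "d s \<noteq> 0" if "s \<in> {0..1}" for s
      using inv[OF that] by (simp add: d_def invertible_det_nz)
  qed (simp add: d_def)
  have g_deriv: "(g has_real_derivative g' t) (at t)" if "t \<in> {0..1}" for t
    using d'[OF that] d_pos[OF that] unfolding g_def g'_def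
    by (auto intro!: derivative_eq_intros)
  have h_deriv: "(h has_real_derivative h' t) (at t)" if "t \<in> {0..1}" for t
  proof -
    have "0 < 1 - t * L"
      using tL[OF that] that by simp
    then show ?thesis
      unfolding h_def h'_def by (auto intro!: derivative_eq_intros simp: field_simps power2_eq_square)
  qed
  have "\<bar>g' t\<bar> \<le> h' t" if "t \<in> {0..1}" for t
    using abs_trace_sub_matrix_inv_mult_le[OF A \<open>0 \<le> L\<close> tL[OF that]] that
    by (simp add: g'_def h'_def)
  moreover have "continuous_on {0..1} g" "continuous_on {0..1} h"
    using g_deriv h_deriv DERIV_isCont by (blast intro: continuous_at_imp_continuous_on)+
  ultimately have "norm (g 1 - g 0) \<le> h 1 - h 0"
    using g_deriv h_deriv
    by (intro differentiable_bound_general[of 0 1 g h g' h'])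
      (simp_all add: has_real_derivative_iff_has_vector_derivative)
  moreover have "g 0 = 0" "h 0 = 0"
    by (simp_all add: g_def h_def d_def)
  moreover have "g 1 = trace A - ln \<bar>det (mat 1 + A)\<bar>"
    using d_pos[of 1] by (simp add: g_def d_def)
  ultimately show ?thesis
    by (simp add: h_def)
qed

theorem theorem1:
  fixes f :: "real^'n \<Rightarrow> real^'n" and x0 :: "real^'n" and L :: real
    and A :: "real^'n^'n"
  assumes diff: "\<And>x. f differentiable (at x)"
    and lip: "L-lipschitz_on UNIV f"
    and L1: "L < 1"
    and A_def: "A = jacobian f (at x0)"
  shows "\<bar>trace A - ln \<bar>det (mat 1 + A)\<bar>\<bar> \<le> real CARD('n) * (- ln (1 - L) - L)"
proof -
  have "(f has_derivative (\<lambda>v. A *v v)) (at x0)"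
    using jacobian_works diff A_def by blast
  then have "norm (A *v v) \<le> L * norm v" for v
    by (rule has_derivative_norm_le_lipschitz[OF _ lip])
  then show ?thesis
    by (rule abs_trace_sub_ln_abs_det_le[OF _ lipschitz_on_nonneg[OF lip] L1])
qed

end
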